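(* Let $\alpha,\beta>0$ and $p,q\in(0,1)$. Let $N\sim\mathrm{NBin}(\alpha,p)$ and let $X_1,X_2,\dots$ be independent copies of $X\sim\mathrm{NBin}(\beta,q)$, independent of $N$, and let $L=X_1+\dots+X_N$. Then $a_n=\mathbb{P}[L=n]$ satisfies \[ a_n\sim C\, z_1^{-n} n^{\alpha-1}\qquad (n\to\infty), \] where \[ z_1=\frac{1-q(1-p)^{1/\beta}}{1-q},\qquad C=\frac{(pq)^{\alpha}(1-p)^{\alpha/\beta}}{\Gamma(\alpha)\,\beta^{\alpha}\,(1-q(1-p)^{1/\beta})^{\alpha}}. \]
   Context: $\mathrm{NBin}(\alpha,p)$ denotes the negative binomial distribution $\mathbb{P}[Y=n]=\binom{\alpha+n-1}{n}p^{\alpha}(1-p)^n$, $n\ge0$, with probability generating function $\left(\frac{p}{1-(1-p)z}\right)^{\alpha}$. Thus $L$ has probability generating function $\left(\frac{p}{1-(1-p)\left(\frac{q}{1-(1-q)z}\right)^{\beta}}\right)^{\alpha}$. *)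

theory Defs
  imports "HOL-Probability.Probability" "HOL-Library.Landau_Symbols"
begin

definition nbin :: "real \<Rightarrow> real \<Rightarrow> nat \<Rightarrow> real" where
  "nbin \<alpha> p n = ((\<alpha> + real n - 1) gchoose n) * p powr \<alpha> * (1 - p) ^ n"

fun iid_sum_pmf :: "nat pmf \<Rightarrow> nat \<Rightarrow> nat pmf" where
  "iid_sum_pmf X 0 = return_pmf 0"
| "iid_sum_pmf X (Suc k) =
     bind_pmf (iid_sum_pmf X k) (\<lambda>s. bind_pmf X (\<lambda>x. return_pmf (s + x)))"

definition random_sum_pmf :: "nat pmf \<Rightarrow> nat pmf \<Rightarrow> nat pmf" where
  "random_sum_pmf N X = bind_pmf N (iid_sum_pmf X)"

end

theory Submission
  imports Defs "HOL-Complex_Analysis.Complex_Analysis" "HOL-Real_Asymp.Real_Asymp"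
begin

text \<open>
  The generating function of L is G(x) = p^\<alpha> D(x)^(-\<alpha>), where
  D(z) = 1 - \<kappa> (1 - (1 - q) z)^(-\<beta>) and \<kappa> = (1 - p) q^\<beta>. The denominator D has a simple zero
  at z1, where 1 - (1 - q) z1 = c = q (1 - p)^(1/\<beta>), and no other zero on the closed disc
  |z| \<le> z1, because there |1 - (1 - q) z| > c away from z1. Hence
  G(z) = p^\<alpha> \<Phi>(z) (1 - z/z1)^(-\<alpha>) with \<Phi>(z) = (D(z) / (1 - z/z1))^(-\<alpha>) holomorphic on a
  disc of radius larger than z1. The coefficients binom(\<alpha> + m - 1, m) z1^(-m) of
  (1 - z/z1)^(-\<alpha>) behave like z1^(-m) m^(\<alpha> - 1) / \<Gamma>(\<alpha>), and convolving them with the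
  geometrically smaller Taylor coefficients of \<Phi> only multiplies this asymptotic by
  \<Phi>(z1) = (\<beta> (1 - c) / c)^(-\<alpha>) (Darboux's method).
\<close>

section \<open>Negative binomial series\<close>

lemma gbinomial_negated_sums:
  fixes a z :: real
  assumes "\<bar>z\<bar> < 1"
  shows "(\<lambda>n. ((a + real n - 1) gchoose n) * z ^ n) sums (1 - z) powr (-a)"
proof -
  have "(\<lambda>n. ((-a) gchoose n) * (-z) ^ n) sums (1 + -z) powr (-a)"
    by (rule gen_binomial_real) (use assms in simp)
  moreover have "((-a) gchoose n) * (-z) ^ n = ((a + real n - 1) gchoose n) * z ^ n" for n
  proof -
    have "((-a) gchoose n) = (-1) ^ n * ((a + real n - 1) gchoose n)"
      by (subst gbinomial_negated_upper) (simp add: algebra_simps)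
    moreover have "(-z) ^ n = (-1) ^ n * z ^ n"
      by (rule power_minus)
    moreover have "(-1 :: real) ^ n * (-1) ^ n = 1"
      by (simp flip: power_mult_distrib)
    ultimately show ?thesis
      by (metis (no_types, lifting) mult.assoc mult.left_commute mult_1)
  qed
  ultimately show ?thesis by simp
qed

lemma nbin_sums:
  fixes a p t :: real
  assumes "\<bar>(1 - p) * t\<bar> < 1"
  shows "(\<lambda>n. nbin a p n * t ^ n) sums (p powr a * (1 - (1 - p) * t) powr (-a))"
  using sums_mult[OF gbinomial_negated_sums[OF assms, of a], of "p powr a"]
  by (simp add: nbin_def power_mult_distrib mult_ac)

lemma gbinomial_nonneg:
  fixes a :: real
  assumes "a > 0"
  shows "((a + real n - 1) gchoose n) \<ge> 0"
  using pochhammer_pos[OF assms, of n] by (simp add: gbinomial_pochhammer')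

section \<open>Probability generating functions\<close>

definition pgf :: "nat pmf \<Rightarrow> real \<Rightarrow> ennreal" where
  "pgf Y x = (\<integral>\<^sup>+n. ennreal (x ^ n) \<partial>measure_pmf Y)"

lemma pgf_eq_ennreal_iff_sums:
  assumes "0 \<le> x" "0 \<le> V"
  shows "pgf Y x = ennreal V \<longleftrightarrow> (\<lambda>n. pmf Y n * x ^ n) sums V"
proof -
  have "pgf Y x = (\<Sum>n. ennreal (pmf Y n * x ^ n))"
    unfolding pgf_def nn_integral_measure_pmf nn_integral_count_space_nat
    using assms by (simp add: ennreal_mult')
  moreover have "(\<lambda>n. ennreal (pmf Y n * x ^ n)) sums (\<Sum>n. ennreal (pmf Y n * x ^ n))"
    by (rule summable_sums[OF summableI])
  ultimately have "pgf Y x = ennreal V \<longleftrightarrow> (\<lambda>n. ennreal (pmf Y n * x ^ n)) sums ennreal V"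
    using sums_unique2 by metis
  also have "\<dots> \<longleftrightarrow> (\<lambda>n. pmf Y n * x ^ n) sums V"
    using assms by (intro sums_ennreal) auto
  finally show ?thesis .
qed

lemma pgf_iid_sum_pmf:
  assumes "0 \<le> x"
  shows "pgf (iid_sum_pmf X k) x = pgf X x ^ k"
proof (induction k)
  case 0
  then show ?case by (simp add: pgf_def)
next
  case (Suc k)
  have "pgf (iid_sum_pmf X (Suc k)) x
          = (\<integral>\<^sup>+s. (\<integral>\<^sup>+y. ennreal (x ^ s) * ennreal (x ^ y) \<partial>measure_pmf X) \<partial>measure_pmf (iid_sum_pmf X k))"
    using assms by (simp add: pgf_def power_add ennreal_mult')
  also have "\<dots> = (\<integral>\<^sup>+s. ennreal (x ^ s) * pgf X x \<partial>measure_pmf (iid_sum_pmf X k))"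
    by (simp add: pgf_def nn_integral_cmult)
  also have "\<dots> = pgf (iid_sum_pmf X k) x * pgf X x"
    by (simp add: pgf_def nn_integral_multc)
  finally show ?case using Suc by (simp add: mult.commute)
qed

lemma pgf_random_sum_pmf:
  assumes "0 \<le> x" "0 \<le> H" "pgf X x = ennreal H"
  shows "pgf (random_sum_pmf N X) x = pgf N H"
proof -
  have "pgf (random_sum_pmf N X) x = (\<integral>\<^sup>+k. pgf (iid_sum_pmf X k) x \<partial>measure_pmf N)"
    unfolding random_sum_pmf_def pgf_def by simp
  also have "\<dots> = (\<integral>\<^sup>+k. ennreal (H ^ k) \<partial>measure_pmf N)"
    using assms by (simp add: pgf_iid_sum_pmf ennreal_power)
  also have "\<dots> = pgf N H"
    by (simp add: pgf_def)
  finally show ?thesis .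
qed

lemma random_sum_pmf_nbin_sums:
  fixes \<alpha> \<beta> p q x :: real and N X :: "nat pmf"
  assumes "0 < p" "p < 1" "0 < q" "q < 1" "\<beta> > 0"
    and N: "\<And>n. pmf N n = nbin \<alpha> p n" and X: "\<And>n. pmf X n = nbin \<beta> q n"
    and x: "0 \<le> x" "x < 1"
  shows "(\<lambda>n. pmf (random_sum_pmf N X) n * x ^ n) sums
           (p powr \<alpha> * (1 - (1 - p) * (q powr \<beta> * (1 - (1 - q) * x) powr (- \<beta>))) powr (- \<alpha>))"
proof -
  define H where "H = q powr \<beta> * (1 - (1 - q) * x) powr (- \<beta>)"
  have "0 \<le> (1 - q) * x" "(1 - q) * x \<le> x"
    using assms by (simp_all add: mult_left_le_one_le)
  have "q \<le> 1 - (1 - q) * x"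
    using mult_nonneg_nonneg[of "1 - q" "1 - x"] assms by (simp add: algebra_simps)
  then have "H \<le> q powr \<beta> * q powr (- \<beta>)"
    unfolding H_def using assms by (intro mult_left_mono powr_mono2') auto
  also have "\<dots> = 1"
    using assms by (simp flip: powr_add)
  finally have "(1 - p) * H \<le> 1 - p"
    using assms by (intro mult_left_le) auto
  then have "(1 - p) * H < 1"
    using assms by linarith
  have "0 \<le> H" by (simp add: H_def)
  have "(\<lambda>n. pmf X n * x ^ n) sums H"
    unfolding X H_def using assms \<open>0 \<le> (1 - q) * x\<close> \<open>(1 - q) * x \<le> x\<close> by (intro nbin_sums) auto
  then have "pgf X x = ennreal H"
    using x \<open>0 \<le> H\<close> by (simp add: pgf_eq_ennreal_iff_sums)
  moreover have "(\<lambda>k. pmf N k * H ^ k) sums (p powr \<alpha> * (1 - (1 - p) * H) powr (- \<alpha>))"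
    unfolding N using \<open>0 \<le> H\<close> \<open>(1 - p) * H < 1\<close> assms by (intro nbin_sums) simp
  then have "pgf N H = ennreal (p powr \<alpha> * (1 - (1 - p) * H) powr (- \<alpha>))"
    using \<open>0 \<le> H\<close> by (simp add: pgf_eq_ennreal_iff_sums)
  ultimately have "pgf (random_sum_pmf N X) x = ennreal (p powr \<alpha> * (1 - (1 - p) * H) powr (- \<alpha>))"
    using pgf_random_sum_pmf[of x H X N] x \<open>0 \<le> H\<close> by simp
  then show ?thesis
    using x by (simp add: pgf_eq_ennreal_iff_sums H_def)
qed

section \<open>Coefficient asymptotics\<close>

lemma gbinomial_powr_tendsto:
  fixes a :: real
  assumes "a > 0"
  shows "(\<lambda>m. ((a + real m - 1) gchoose m) * (real m + 1) powr (1 - a)) \<longlonglongrightarrow> 1 / Gamma a"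
proof -
  have "(\<lambda>m. ((a + real m - 1) gchoose m) * exp (- (a - 1) * ln (real m))) \<longlonglongrightarrow> rGamma a"
    using Gamma_gbinomial[of "a - 1"] by (simp add: algebra_simps)
  moreover have "(\<lambda>m. ((real m + 1) / real m) powr (1 - a)) \<longlonglongrightarrow> 1"
    by real_asymp
  ultimately have "(\<lambda>m. ((a + real m - 1) gchoose m) * exp (- (a - 1) * ln (real m))
                      * ((real m + 1) / real m) powr (1 - a)) \<longlonglongrightarrow> 1 / Gamma a"
    using tendsto_mult[of _ "rGamma a" _ _ 1] by (simp add: rGamma_inverse_Gamma divide_inverse)
  moreover have "\<forall>\<^sub>F m in sequentially.
      ((a + real m - 1) gchoose m) * exp (- (a - 1) * ln (real m)) * ((real m + 1) / real m) powr (1 - a)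
      = ((a + real m - 1) gchoose m) * (real m + 1) powr (1 - a)"
    using eventually_gt_at_top[of "0::nat"]
  proof eventually_elim
    case (elim m)
    have "exp (- (a - 1) * ln (real m)) = real m powr (1 - a)"
      using elim by (simp add: powr_def algebra_simps)
    moreover have "real m powr (1 - a) * ((real m + 1) / real m) powr (1 - a) = (real m + 1) powr (1 - a)"
      using elim by (simp flip: powr_mult)
    ultimately show ?case by (simp add: mult.assoc)
  qed
  ultimately show ?thesis
    by (rule Lim_transform_eventually)
qed

lemma summable_powr_mult_geometric:
  fixes \<theta> s :: real
  assumes "0 < \<theta>" "\<theta> < 1"
  shows "summable (\<lambda>k::nat. (real k + 1) powr s * \<theta> ^ k)"
proof (rule summable_comparison_test_ev)
  define \<eta> where "\<eta> = (1 + \<theta>) / 2"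
  have \<eta>: "\<theta> < \<eta>" "\<eta> < 1" using assms by (auto simp: \<eta>_def)
  show "summable (\<lambda>k. \<eta> ^ k)" using \<eta> assms by simp
  have "(\<lambda>k::nat. (real k + 1) powr s * (\<theta> / \<eta>) ^ k) \<longlonglongrightarrow> 0"
    using assms \<eta> by real_asymp
  then have "\<forall>\<^sub>F k in sequentially. (real k + 1) powr s * (\<theta> / \<eta>) ^ k < 1"
    by (rule order_tendstoD) simp
  then show "\<forall>\<^sub>F k in sequentially. norm ((real k + 1) powr s * \<theta> ^ k) \<le> \<eta> ^ k"
  proof eventually_elim
    case (elim k)
    have "(real k + 1) powr s * \<theta> ^ k = ((real k + 1) powr s * (\<theta> / \<eta>) ^ k) * \<eta> ^ k"
      using \<eta> assms by (simp add: power_divide)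
    also have "\<dots> \<le> \<eta> ^ k"
      using elim \<eta> assms by (intro mult_left_le_one_le) auto
    finally show ?case using assms by simp
  qed
qed

lemma Suc_ratio_powr_le:
  fixes k n :: nat and e :: real
  assumes "k \<le> n"
  shows "((real n + 1) / (real (n - k) + 1)) powr e \<le> (real k + 1) powr \<bar>e\<bar>"
proof -
  define y where "y = (real n + 1) / (real (n - k) + 1)"
  have "1 \<le> y" using assms by (simp add: y_def field_simps)
  have "real n + 1 \<le> (real k + 1) * (real (n - k) + 1)"
    using assms by (simp add: of_nat_diff algebra_simps mult_left_mono)
  then have "y \<le> real k + 1" by (simp add: y_def field_simps)
  have "y powr e \<le> y powr \<bar>e\<bar>" using \<open>1 \<le> y\<close> by (intro powr_mono) auto
  also have "\<dots> \<le> (real k + 1) powr \<bar>e\<bar>" using \<open>1 \<le> y\<close> \<open>y \<le> real k + 1\<close> by (intro powr_mono2) auto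
  finally show ?thesis by (simp add: y_def)
qed

lemma shifted_weight_tendsto:
  fixes v :: "nat \<Rightarrow> real"
  assumes "v \<longlonglongrightarrow> g"
  shows "(\<lambda>n. v (n - k) * ((real n + 1) / (real (n - k) + 1)) powr s) \<longlonglongrightarrow> g"
proof -
  have "(\<lambda>n. v (n - k)) \<longlonglongrightarrow> g"
    using assms by (rule filterlim_compose[OF _ filterlim_minus_const_nat_at_top])
  moreover have "(\<lambda>n. ((real n + 1) / (real n - real k + 1)) powr s) \<longlonglongrightarrow> 1"
    by real_asymp
  then have "(\<lambda>n. ((real n + 1) / (real (n - k) + 1)) powr s) \<longlonglongrightarrow> 1"
    by (rule Lim_transform_eventually)
       (use eventually_ge_at_top[of k] in \<open>eventually_elim, simp add: of_nat_diff\<close>)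
  ultimately show ?thesis
    using tendsto_mult by fastforce
qed

lemma convolution_weighted_tendsto:
  fixes \<psi> :: "nat \<Rightarrow> 'a :: {real_normed_field, banach}" and v :: "nat \<Rightarrow> real"
  assumes v: "v \<longlonglongrightarrow> g" and \<psi>: "\<And>k. norm (\<psi> k) \<le> C * \<theta> ^ k" and \<theta>: "0 < \<theta>" "\<theta> < 1"
  shows "(\<lambda>n. \<Sum>k\<le>n. \<psi> k * of_real (v (n - k) * ((real n + 1) / (real (n - k) + 1)) powr s))
           \<longlonglongrightarrow> (\<Sum>k. \<psi> k) * of_real g"
proof -
  define a where
    "a k n = (if k \<le> n then \<psi> k * of_real (v (n - k) * ((real n + 1) / (real (n - k) + 1)) powr s) else 0)"
    for k n
  have "Bseq v" using v by (intro convergent_imp_Bseq convergentI)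
  then obtain B where B: "B > 0" "\<And>m. \<bar>v m\<bar> \<le> B" by (elim BseqE) auto
  have C: "0 \<le> C" using \<psi>[of 0] norm_ge_zero[of "\<psi> 0"] by (simp del: norm_ge_zero)
  define M where "M k = (C * B) * ((real k + 1) powr \<bar>s\<bar> * \<theta> ^ k)" for k
  have lim: "(\<lambda>n. a k n) \<longlonglongrightarrow> \<psi> k * of_real g" for k
  proof -
    have "(\<lambda>n. \<psi> k * of_real (v (n - k) * ((real n + 1) / (real (n - k) + 1)) powr s))
            \<longlonglongrightarrow> \<psi> k * of_real g"
      by (intro tendsto_intros shifted_weight_tendsto v)
    then show ?thesis
      by (rule Lim_transform_eventually)
         (use eventually_ge_at_top[of k] in \<open>eventually_elim, simp add: a_def\<close>)
  qed
  have bound: "norm (a k n) \<le> M k" for k n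
  proof (cases "k \<le> n")
    case True
    have "norm (a k n) = norm (\<psi> k) * (\<bar>v (n - k)\<bar> * ((real n + 1) / (real (n - k) + 1)) powr s)"
      using True by (simp add: a_def norm_mult abs_mult)
    also have "\<dots> \<le> (C * \<theta> ^ k) * (B * (real k + 1) powr \<bar>s\<bar>)"
      by (intro mult_mono \<psi> B Suc_ratio_powr_le True) (use B C \<theta> in auto)
    finally show ?thesis by (simp add: M_def mult_ac)
  next
    case False
    then show ?thesis using C B \<theta> by (simp add: a_def M_def)
  qed
  have "summable M"
    unfolding M_def by (intro summable_mult summable_powr_mult_geometric \<theta>)
  then have "(\<forall>\<^sub>F n in sequentially. summable (\<lambda>k. norm (a k n))) \<and>
      summable (\<lambda>k. norm (\<psi> k * of_real g)) \<and>
      (\<lambda>n. \<Sum>k. a k n) \<longlonglongrightarrow> (\<Sum>k. \<psi> k * of_real g)"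
    by (intro tannerys_theorem[OF lim]) (auto intro: always_eventually bound)
  moreover have "summable \<psi>"
    by (rule summable_comparison_test[of _ "\<lambda>k. C * \<theta> ^ k"]) (use \<psi> \<theta> in auto)
  then have "(\<Sum>k. \<psi> k * of_real g) = (\<Sum>k. \<psi> k) * of_real g"
    by (rule suminf_mult2[symmetric])
  moreover have "(\<Sum>k. a k n) = (\<Sum>k\<le>n. \<psi> k * of_real (v (n - k) * ((real n + 1) / (real (n - k) + 1)) powr s))"
    for n by (subst suminf_finite[of "{..n}"]) (auto simp: a_def)
  ultimately show ?thesis by simp
qed

lemma convolution_powr_tendsto:
  fixes \<psi> :: "nat \<Rightarrow> 'a :: {real_normed_field, banach}" and b :: "nat \<Rightarrow> real"
  assumes b: "(\<lambda>m. b m * (real m + 1) powr s) \<longlonglongrightarrow> g"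
    and \<psi>: "\<And>k. norm (\<psi> k) \<le> C * \<theta> ^ k" and \<theta>: "0 < \<theta>" "\<theta> < 1"
  shows "(\<lambda>n. (\<Sum>i\<le>n. \<psi> i * of_real (b (n - i))) * of_real ((real n + 1) powr s))
           \<longlonglongrightarrow> (\<Sum>k. \<psi> k) * of_real g"
proof -
  have "b (n - k) * (real n + 1) powr s
          = b (n - k) * (real (n - k) + 1) powr s * ((real n + 1) / (real (n - k) + 1)) powr s" for n k
  proof -
    have "(real (n - k) + 1) * ((real n + 1) / (real (n - k) + 1)) = real n + 1"
      by (simp add: field_simps)
    then show ?thesis
      by (simp add: mult.assoc flip: powr_mult)
  qed
  then have "(\<Sum>i\<le>n. \<psi> i * of_real (b (n - i))) * of_real ((real n + 1) powr s)
      = (\<Sum>i\<le>n. \<psi> i * of_real (b (n - i) * (real (n - i) + 1) powr s * ((real n + 1) / (real (n - i) + 1)) powr s))"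
    for n by (simp only: sum_distrib_right mult.assoc flip: of_real_mult)
  with convolution_weighted_tendsto[OF b \<psi> \<theta>] show ?thesis
    by simp
qed

lemma filterlim_of_real_at_right_0:
  "filterlim (\<lambda>x::real. of_real x :: 'a :: real_normed_algebra_1) (at 0) (at_right 0)"
proof (rule filterlim_atI)
  show "((\<lambda>x::real. of_real x :: 'a) \<longlongrightarrow> 0) (at_right 0)"
    by (rule tendsto_eq_intros refl tendsto_ident_at)+ simp
  show "\<forall>\<^sub>F x in at_right 0. (of_real x :: 'a) \<noteq> 0"
    using eventually_at_right_less[of "0::real"] by eventually_elim auto
qed

lemma summable_powser_of_interval:
  fixes e :: "nat \<Rightarrow> 'a :: {real_normed_div_algebra, banach}"
  assumes "\<And>x. 0 < x \<Longrightarrow> x < r \<Longrightarrow> summable (\<lambda>j. e j * of_real x ^ j)" and "norm y < r"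
  shows "summable (\<lambda>j. e j * y ^ j)"
proof -
  define t where "t = (norm y + r) / 2"
  have "0 < t"
    using add_nonneg_pos[OF norm_ge_zero le_less_trans[OF norm_ge_zero assms(2)]] unfolding t_def by simp
  have "t < r" "norm y < t" using assms(2) unfolding t_def by simp_all
  then have "norm y < norm (of_real t :: 'a)"
    using \<open>0 < t\<close> by simp
  with assms(1)[OF \<open>0 < t\<close> \<open>t < r\<close>] show ?thesis
    by (rule powser_inside)
qed

lemma powser_eq_0_on_interval:
  fixes d :: "nat \<Rightarrow> 'a :: {real_normed_field, banach}" and r :: real
  assumes r: "r > 0"
    and sums0: "\<And>x. 0 < x \<Longrightarrow> x < r \<Longrightarrow> (\<lambda>n. d n * of_real x ^ n) sums 0"
  shows "d n = 0"
proof (induction n rule: less_induct)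
  case (less m)
  define e where "e j = d (j + m)" for j
  have e_sums: "(\<lambda>j. e j * of_real x ^ j) sums 0" if x: "0 < x" "x < r" for x
  proof -
    have "(\<lambda>j. d (j + m) * of_real x ^ (j + m)) sums 0"
      using sums_split_initial_segment[OF sums0[OF x], of m] less by simp
    then have "(\<lambda>j. e j * of_real x ^ j * of_real x ^ m) sums (0 * of_real x ^ m)"
      by (simp add: e_def power_add mult_ac)
    then show ?thesis using x by (subst (asm) sums_mult2_iff) auto
  qed
  define f where "f y = (\<Sum>j. e j * y ^ j)" for y :: 'a
  have f_sums: "(\<lambda>j. e j * y ^ j) sums f y" if "norm y < r" for y
    unfolding f_def using e_sums sums_summable
    by (intro summable_sums summable_powser_of_interval[OF _ that]) blast
  have "(f \<longlongrightarrow> e 0) (at 0)"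
    by (rule powser_limit_0[OF r f_sums])
  then have "((\<lambda>x. f (of_real x)) \<longlongrightarrow> e 0) (at_right 0)"
    by (rule filterlim_compose[OF _ filterlim_of_real_at_right_0])
  moreover have "\<forall>\<^sub>F x in at_right 0. f (of_real x) = 0"
    unfolding eventually_at_right_field
  proof (intro exI[of _ r] conjI allI impI)
    fix x :: real assume "0 < x" "x < r"
    then show "f (of_real x) = 0"
      using sums_unique2[OF f_sums e_sums] by simp
  qed (use r in auto)
  ultimately have "((\<lambda>x. 0) \<longlongrightarrow> e 0) (at_right (0::real))"
    by (rule Lim_transform_eventually)
  then have "e 0 = 0"
    using tendsto_unique[OF _ _ tendsto_const] trivial_limit_at_right_real by blast
  then show ?case by (simp add: e_def)
qed

lemma cball_subset_open_imp_ball_subset: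
  fixes B :: "'a :: {real_normed_vector, heine_borel} set"
  assumes "open B" "cball 0 r \<subseteq> B" "0 \<le> r"
  obtains R where "r < R" "ball 0 R \<subseteq> B"
proof -
  obtain \<epsilon> where \<epsilon>: "\<epsilon> > 0" "(\<Union>x\<in>cball 0 r. ball x \<epsilon>) \<subseteq> B"
    using compact_subset_open_imp_ball_epsilon_subset[OF compact_cball assms(1,2)] by blast
  have "w \<in> (\<Union>x\<in>cball 0 r. ball x \<epsilon>)" if w: "w \<in> ball 0 (r + \<epsilon>)" for w :: 'a
  proof (cases "norm w \<le> r")
    case True
    then show ?thesis using \<epsilon>(1) by (auto intro!: bexI[of _ w])
  next
    case False
    \<comment> \<open>the radial projection of \<open>w\<close> onto the sphere of radius \<open>r\<close> is \<open>\<epsilon>\<close>-close to \<open>w\<close>\<close>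
    define x where "x = (r / norm w) *\<^sub>R w"
    have "norm w > 0" using False assms(3) by linarith
    then have "norm x = r" using assms(3) by (simp add: x_def)
    have "dist w x = norm ((1 - r / norm w) *\<^sub>R w)"
      by (simp add: dist_norm x_def algebra_simps)
    also have "\<dots> = norm w - r"
      using \<open>norm w > 0\<close> False by (simp add: field_simps)
    finally have "w \<in> ball x \<epsilon>" using w by (simp add: dist_commute)
    then show ?thesis using \<open>norm x = r\<close> by auto
  qed
  then have "ball 0 (r + \<epsilon>) \<subseteq> B" using \<epsilon>(2) by blast
  then show ?thesis using \<epsilon>(1) that[of "r + \<epsilon>"] by simp
qed

lemma asymp_equiv_geometric_powr:
  fixes a :: "nat \<Rightarrow> real"
  assumes lim: "(\<lambda>n. a n * z ^ n * (real n + 1) powr s) \<longlonglongrightarrow> K" and "K \<noteq> 0" "z > 0"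
  shows "a \<sim>[at_top] (\<lambda>n. K * z powr (- real n) * real n powr (- s))"
proof (rule asymp_equivI')
  have "(\<lambda>n. ((real n + 1) / real n) powr (- s)) \<longlonglongrightarrow> 1" by real_asymp
  then have "(\<lambda>n. a n * z ^ n * (real n + 1) powr s / K * ((real n + 1) / real n) powr (- s))
                   \<longlonglongrightarrow> K / K * 1"
    using \<open>K \<noteq> 0\<close> by (intro tendsto_intros lim)
  then have "(\<lambda>n. a n * z ^ n * (real n + 1) powr s / K * ((real n + 1) / real n) powr (- s)) \<longlonglongrightarrow> 1"
    using \<open>K \<noteq> 0\<close> by simp
  moreover have "\<forall>\<^sub>F n in sequentially.
      a n * z ^ n * (real n + 1) powr s / K * ((real n + 1) / real n) powr (- s)
      = a n / (K * z powr (- real n) * real n powr (- s))"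
    using eventually_gt_at_top[of "0::nat"]
  proof eventually_elim
    case (elim n)
    have "z powr (- real n) = 1 / z ^ n" using \<open>z > 0\<close> by (simp add: powr_minus powr_realpow divide_inverse)
    moreover have "((real n + 1) / real n) powr (- s) = (real n + 1) powr (- s) / real n powr (- s)"
      by (rule powr_divide)
    moreover have "(real n + 1) powr s * (real n + 1) powr (- s) = 1"
      by (simp flip: powr_add)
    moreover have "real n powr (- s) > 0" using elim by simp
    ultimately show ?case using \<open>K \<noteq> 0\<close> \<open>z > 0\<close> by (simp add: field_simps)
  qed
  ultimately show "((\<lambda>n. a n / (K * z powr (- real n) * real n powr (- s))) \<longlongrightarrow> 1) at_top"
    by (rule Lim_transform_eventually)
qed

section \<open>The dominant singularity of the generating function\<close>

locale nbin_compound =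
  fixes \<alpha> \<beta> p q :: real
  assumes \<alpha>: "\<alpha> > 0" and \<beta>: "\<beta> > 0" and p: "0 < p" "p < 1" and q: "0 < q" "q < 1"
begin

definition c :: real where "c = q * (1 - p) powr (1 / \<beta>)"
definition z1 :: real where "z1 = (1 - c) / (1 - q)"
definition \<kappa> :: real where "\<kappa> = (1 - p) * q powr \<beta>"

text \<open>
  D continues the denominator 1 - (1 - p) q^\<beta> (1 - (1 - q) x)^(-\<beta>) of the generating function
  to complex arguments; F is D with its simple zero at z1 divided out.
\<close>

definition A :: "complex \<Rightarrow> complex" where "A z = 1 - of_real (1 - q) * z"
definition D :: "complex \<Rightarrow> complex" where "D z = 1 - of_real \<kappa> * A z powr (- of_real \<beta>)"
definition F :: "complex \<Rightarrow> complex" where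
  "F z = (if z = of_real z1 then - of_real z1 * deriv D (of_real z1) else D z / (1 - z / of_real z1))"
definition \<Phi> :: "complex \<Rightarrow> complex" where "\<Phi> z = F z powr (- of_real \<alpha>)"

lemma c_pos: "0 < c" and c_less_q: "c < q"
proof -
  have "(1 - p) powr (1 / \<beta>) < 1 powr (1 / \<beta>)"
    using p \<beta> by (intro powr_less_mono2) auto
  then show "c < q" unfolding c_def using q by simp
  show "0 < c" unfolding c_def using p q by simp
qed

lemma one_less_z1: "1 < z1" and z1_less: "z1 < 1 / (1 - q)"
  using c_pos c_less_q q by (auto simp: z1_def field_simps)

lemma z1_pos: "0 < z1"
  using one_less_z1 by simp

lemma \<kappa>_pos: "0 < \<kappa>"
  using p q by (simp add: \<kappa>_def)

lemma c_powr_\<beta>: "c powr \<beta> = \<kappa>"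
proof -
  have "c powr \<beta> = q powr \<beta> * ((1 - p) powr (1 / \<beta>)) powr \<beta>"
    unfolding c_def using p q by (simp add: powr_mult)
  also have "((1 - p) powr (1 / \<beta>)) powr \<beta> = 1 - p"
    using \<beta> p by (simp add: powr_powr)
  finally show ?thesis by (simp add: \<kappa>_def)
qed

lemma A_of_real [simp]: "A (of_real x) = of_real (1 - (1 - q) * x)"
  by (simp add: A_def)

lemma A_z1: "1 - (1 - q) * z1 = c"
  using q by (simp add: z1_def)

lemma Re_A_pos: "norm z < 1 / (1 - q) \<Longrightarrow> 0 < Re (A z)"
proof -
  assume "norm z < 1 / (1 - q)"
  then have "(1 - q) * norm z < 1" using q by (simp add: field_simps)
  moreover have "(1 - q) * Re z \<le> (1 - q) * norm z"
    using q complex_Re_le_cmod by (intro mult_left_mono) auto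
  ultimately show ?thesis by (simp add: A_def)
qed

lemma A_notin_nonpos_Reals: "norm z < 1 / (1 - q) \<Longrightarrow> A z \<notin> \<real>\<^sub>\<le>\<^sub>0"
  using Re_A_pos by (force simp: complex_nonpos_Reals_iff)

lemma D_holomorphic: "D holomorphic_on ball 0 (1 / (1 - q))"
  unfolding D_def A_def using A_notin_nonpos_Reals
  by (intro holomorphic_intros) (auto simp: A_def)

lemma D_of_real:
  assumes "(1 - q) * x < 1"
  shows "D (of_real x) = of_real (1 - \<kappa> * (1 - (1 - q) * x) powr (- \<beta>))"
proof -
  have "A (of_real x) powr (- of_real \<beta>) = of_real ((1 - (1 - q) * x) powr (- \<beta>))"
    unfolding A_of_real of_real_minus[symmetric] using assms by (intro powr_of_real) simp
  then show ?thesis by (simp add: D_def)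
qed

lemma D_z1: "D (of_real z1) = 0"
proof -
  have "(1 - q) * z1 < 1" using A_z1 c_pos by linarith
  then show ?thesis
    using c_pos \<kappa>_pos by (simp add: D_of_real A_z1 powr_minus c_powr_\<beta>)
qed

lemma A_has_field_derivative: "(A has_field_derivative - of_real (1 - q)) (at z)"
  unfolding A_def by (auto intro!: derivative_eq_intros)

lemma deriv_D_z1: "deriv D (of_real z1) = - of_real (\<beta> * (1 - q) / c)"
proof -
  let ?s = "- of_real \<beta> :: complex" and ?z1 = "of_real z1 :: complex"
  have "norm ?z1 < 1 / (1 - q)"
    using z1_less z1_pos by simp
  then have "((\<lambda>w. w powr ?s) has_field_derivative ?s * A ?z1 powr (?s - 1)) (at (A ?z1))"
    by (intro has_field_derivative_powr A_notin_nonpos_Reals)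
  from DERIV_chain2[OF this A_has_field_derivative]
  have "(D has_field_derivative 0 - of_real \<kappa> * (?s * A ?z1 powr (?s - 1) * - of_real (1 - q))) (at ?z1)"
    unfolding D_def[abs_def] by (intro DERIV_diff DERIV_const DERIV_cmult)
  moreover have "A ?z1 powr (?s - 1) = of_real (c powr (- \<beta> - 1))"
  proof -
    have "A ?z1 powr (?s - 1) = of_real c powr of_real (- \<beta> - 1)"
      by (simp only: A_of_real A_z1) simp
    also have "\<dots> = of_real (c powr (- \<beta> - 1))"
      using c_pos by (intro powr_of_real) simp
    finally show ?thesis .
  qed
  ultimately have "deriv D ?z1 = - of_real (\<beta> * (1 - q) * (\<kappa> * c powr (- \<beta> - 1)))"
    by (auto dest!: DERIV_imp_deriv simp: algebra_simps)
  also have "\<kappa> * c powr (- \<beta> - 1) = 1 / c"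
    using c_pos by (simp add: powr_diff powr_minus c_powr_\<beta>[symmetric] field_simps)
  finally show ?thesis by simp
qed

lemma F_holomorphic: "F holomorphic_on ball 0 (1 / (1 - q))"
proof -
  have "norm (of_real z1 :: complex) < 1 / (1 - q)"
    using z1_less z1_pos by simp
  then have "(\<lambda>z. if z = of_real z1 then deriv D (of_real z1) else (D z - D (of_real z1)) / (z - of_real z1))
               holomorphic_on ball 0 (1 / (1 - q))"
    by (intro pole_lemma_open D_holomorphic) auto
  then have "(\<lambda>z. - of_real z1 * (if z = of_real z1 then deriv D (of_real z1)
                    else (D z - D (of_real z1)) / (z - of_real z1))) holomorphic_on ball 0 (1 / (1 - q))"
    by (intro holomorphic_intros)
  moreover have "- of_real z1 * (if z = of_real z1 then deriv D (of_real z1)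
                    else (D z - D (of_real z1)) / (z - of_real z1)) = F z" for z
    using z1_pos by (simp add: F_def D_z1 field_simps)
  ultimately show ?thesis by simp
qed

lemma F_z1: "F (of_real z1) = of_real (\<beta> * (1 - c) / c)"
proof -
  have "F (of_real z1) = of_real (z1 * (\<beta> * (1 - q) / c))"
    by (simp add: F_def deriv_D_z1)
  also have "z1 * (\<beta> * (1 - q) / c) = \<beta> * (1 - c) / c"
    using q by (simp add: z1_def)
  finally show ?thesis .
qed

lemma F_z1_pos: "0 < \<beta> * (1 - c) / c"
  using \<beta> c_pos c_less_q q by simp

lemma Re_A_gt_c:
  assumes "norm z \<le> z1" "z \<noteq> of_real z1"
  shows "c < Re (A z)"
proof -
  have "Re z < z1"
  proof (rule ccontr)
    assume "\<not> Re z < z1"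
    with assms(1) complex_Re_le_cmod[of z] have "Re z = z1" by linarith
    moreover have "Re z ^ 2 + Im z ^ 2 \<le> z1 ^ 2"
      using assms(1) norm_ge_zero[of z] by (simp add: cmod_power2 flip: cmod_power2) (simp add: power_mono)
    ultimately have "z = of_real z1" by (simp add: complex_eq_iff)
    with assms(2) show False ..
  qed
  then have "(1 - q) * Re z < (1 - q) * z1" using q by simp
  then show ?thesis using A_z1 by (simp add: A_def)
qed

lemma Re_D_pos:
  assumes "norm z \<le> z1" "z \<noteq> of_real z1"
  shows "0 < Re (D z)"
proof -
  have "c < norm (A z)"
    using Re_A_gt_c[OF assms] complex_Re_le_cmod[of "A z"] by linarith
  then have "norm (A z) powr (- \<beta>) < c powr (- \<beta>)"
    using c_pos \<beta> by (intro powr_less_mono2_neg) auto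
  then have "norm (of_real \<kappa> * A z powr (- of_real \<beta>)) < \<kappa> * c powr (- \<beta>)"
    using \<kappa>_pos by (simp add: norm_mult norm_powr_real_powr')
  also have "\<kappa> * c powr (- \<beta>) = 1"
    using c_pos \<kappa>_pos by (simp add: powr_minus c_powr_\<beta>)
  finally show ?thesis
    using complex_Re_le_cmod[of "of_real \<kappa> * A z powr (- of_real \<beta>)"] by (simp add: D_def)
qed

lemma F_notin_nonpos_Reals:
  assumes "norm z \<le> z1"
  shows "F z \<notin> \<real>\<^sub>\<le>\<^sub>0"
proof (cases "z = of_real z1")
  case True
  then show ?thesis
    using F_z1 F_z1_pos by (simp add: complex_nonpos_Reals_iff)
next
  case False
  show ?thesis
  proof
    assume "F z \<in> \<real>\<^sub>\<le>\<^sub>0"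
    then obtain t where "F z = of_real t" "t \<le> 0"
      by (metis complex_nonpos_Reals_iff complex_eq_iff Re_complex_of_real Im_complex_of_real)
    moreover have "1 - z / of_real z1 \<noteq> 0"
      using False z1_pos by (auto simp: field_simps)
    ultimately have "D z = of_real t * (1 - z / of_real z1)"
      using False by (simp add: F_def field_simps)
    then have "Re (D z) = t * (1 - Re z / z1)" by simp
    moreover have "Re z \<le> z1"
      using assms complex_Re_le_cmod[of z] by linarith
    then have "0 \<le> 1 - Re z / z1" using z1_pos by (simp add: field_simps)
    ultimately have "Re (D z) \<le> 0" using \<open>t \<le> 0\<close> by (simp add: mult_nonpos_nonneg)
    with Re_D_pos[OF assms False] show False by simp
  qed
qed

lemma \<Phi>_holomorphic_ball:
  obtains R where "z1 < R" "\<Phi> holomorphic_on ball 0 R"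
proof -
  let ?B = "ball 0 (1 / (1 - q)) \<inter> F -` (- \<real>\<^sub>\<le>\<^sub>0)"
  have "open ?B"
    using F_holomorphic holomorphic_on_imp_continuous_on closed_nonpos_Reals_complex
    by (intro continuous_open_preimage) auto
  moreover have "cball 0 z1 \<subseteq> ?B"
    using z1_less F_notin_nonpos_Reals by auto
  ultimately obtain R where "z1 < R" "ball 0 R \<subseteq> ?B"
    using z1_pos by (elim cball_subset_open_imp_ball_subset) auto
  moreover have "\<Phi> holomorphic_on ball 0 R"
    unfolding \<Phi>_def[abs_def] using \<open>ball 0 R \<subseteq> ?B\<close>
    by (intro holomorphic_intros holomorphic_on_subset[OF F_holomorphic]) auto
  ultimately show ?thesis using that by blast
qed

lemma D_real_pos:
  assumes "0 \<le> x" "x < z1"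
  shows "0 < 1 - \<kappa> * (1 - (1 - q) * x) powr (- \<beta>)"
proof -
  have "c < 1 - (1 - q) * x" using assms q A_z1 by (smt (verit) mult_strict_left_mono)
  then have "(1 - (1 - q) * x) powr (- \<beta>) < c powr (- \<beta>)"
    using c_pos \<beta> by (intro powr_less_mono2_neg) auto
  then have "\<kappa> * (1 - (1 - q) * x) powr (- \<beta>) < \<kappa> * c powr (- \<beta>)"
    using \<kappa>_pos by simp
  also have "\<kappa> * c powr (- \<beta>) = 1"
    using c_pos \<kappa>_pos by (simp add: powr_minus c_powr_\<beta>)
  finally show ?thesis by simp
qed

lemma \<Phi>_of_real_factor:
  assumes "0 \<le> x" "x < z1"
  shows "\<Phi> (of_real x) * of_real ((1 - x / z1) powr (- \<alpha>))
           = of_real ((1 - \<kappa> * (1 - (1 - q) * x) powr (- \<beta>)) powr (- \<alpha>))"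
proof -
  define d where "d = 1 - \<kappa> * (1 - (1 - q) * x) powr (- \<beta>)"
  have "d > 0" "0 < 1 - x / z1"
    using D_real_pos[OF assms] assms z1_pos by (simp_all add: d_def field_simps)
  have "(1 - q) * x < 1" using assms q A_z1 c_pos by (smt (verit) mult_strict_left_mono)
  then have F_x: "F (of_real x) = of_real (d / (1 - x / z1))"
    using assms by (simp add: F_def D_of_real d_def)
  have "\<Phi> (of_real x) = of_real ((d / (1 - x / z1)) powr (- \<alpha>))"
    unfolding \<Phi>_def F_x of_real_minus[symmetric] using \<open>d > 0\<close> \<open>0 < 1 - x / z1\<close>
    by (intro powr_of_real) simp
  moreover have "(d / (1 - x / z1)) powr (- \<alpha>) * (1 - x / z1) powr (- \<alpha>) = d powr (- \<alpha>)"
    using \<open>d > 0\<close> \<open>0 < 1 - x / z1\<close> assms(2) by (simp add: powr_divide)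
  ultimately show ?thesis by (simp add: d_def flip: of_real_mult)
qed

definition \<phi> :: "nat \<Rightarrow> complex" where "\<phi> n = (deriv ^^ n) \<Phi> 0 / fact n"

definition b :: "nat \<Rightarrow> real" where "b m = ((\<alpha> + real m - 1) gchoose m) / z1 ^ m"

lemma \<Phi>_taylor_sums_ball:
  obtains R where "z1 < R" "\<And>w. norm w < R \<Longrightarrow> (\<lambda>n. \<phi> n * w ^ n) sums \<Phi> w"
proof -
  obtain R where "z1 < R" and holo: "\<Phi> holomorphic_on ball 0 R"
    by (rule \<Phi>_holomorphic_ball)
  have "(\<lambda>n. \<phi> n * w ^ n) sums \<Phi> w" if "norm w < R" for w
    using holomorphic_power_series[OF holo] that by (simp add: \<phi>_def)
  with \<open>z1 < R\<close> show ?thesis by (rule that)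
qed

lemma \<Phi>_taylor_sums:
  assumes "norm w \<le> z1"
  shows "(\<lambda>n. \<phi> n * w ^ n) sums \<Phi> w"
proof -
  obtain R where "z1 < R" and sums: "\<And>w. norm w < R \<Longrightarrow> (\<lambda>n. \<phi> n * w ^ n) sums \<Phi> w"
    using \<Phi>_taylor_sums_ball by blast
  show ?thesis
    using assms \<open>z1 < R\<close> by (intro sums) simp
qed

lemma \<phi>_geometric_bound:
  obtains r M where "z1 < r" "\<And>n. norm (\<phi> n) \<le> M * (1 / r) ^ n"
proof -
  obtain R where "z1 < R" and sums: "\<And>w. norm w < R \<Longrightarrow> (\<lambda>n. \<phi> n * w ^ n) sums \<Phi> w"
    using \<Phi>_taylor_sums_ball by blast
  define r where "r = (z1 + R) / 2"
  have r: "z1 < r" "r < R" "0 < r" using \<open>z1 < R\<close> z1_pos by (auto simp: r_def)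
  have "(\<lambda>n. \<phi> n * of_real r ^ n) \<longlonglongrightarrow> 0"
    using sums[of "of_real r"] r by (intro summable_LIMSEQ_zero sums_summable) auto
  then obtain M where M: "\<And>n. norm (\<phi> n * of_real r ^ n) \<le> M"
    by (metis BseqE convergent_imp_Bseq convergentI)
  have "norm (\<phi> n) \<le> M * (1 / r) ^ n" for n
    using M[of n] r by (simp add: norm_mult norm_power field_simps)
  with \<open>z1 < r\<close> show ?thesis by (rule that)
qed

lemma b_sums:
  assumes "\<bar>x\<bar> < z1"
  shows "(\<lambda>m. b m * x ^ m) sums (1 - x / z1) powr (- \<alpha>)"
proof -
  have "\<bar>x / z1\<bar> < 1" using assms z1_pos by simp
  from gbinomial_negated_sums[OF this, of \<alpha>] show ?thesis
    by (simp add: b_def power_divide)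
qed

lemma convolution_sums:
  assumes x: "0 \<le> x" "x < z1"
  shows "(\<lambda>n. (\<Sum>i\<le>n. \<phi> i * of_real (b (n - i))) * of_real x ^ n)
           sums of_real ((1 - \<kappa> * (1 - (1 - q) * x) powr (- \<beta>)) powr (- \<alpha>))"
proof -
  have "summable (\<lambda>i. \<phi> i * of_real z1 ^ i)"
    using \<Phi>_taylor_sums[of "of_real z1"] z1_pos by (simp add: sums_iff)
  moreover have "norm (of_real x :: complex) < norm (of_real z1 :: complex)"
    using x by simp
  ultimately have "summable (\<lambda>i. norm (\<phi> i * of_real x ^ i))"
    by (rule powser_insidea)
  moreover have b_sums_x: "(\<lambda>m. b m * x ^ m) sums (1 - x / z1) powr (- \<alpha>)"
    using x by (intro b_sums) auto
  have "norm (of_real (b j * x ^ j) :: complex) = b j * x ^ j" for j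
    using gbinomial_nonneg[OF \<alpha>, of j] z1_pos x
    by (simp only: norm_of_real, intro abs_of_nonneg) (simp add: b_def)
  then have "summable (\<lambda>j. norm (of_real (b j * x ^ j) :: complex))"
    using b_sums_x by (simp add: sums_iff)
  ultimately have "(\<lambda>n. \<Sum>i\<le>n. \<phi> i * of_real x ^ i * of_real (b (n - i) * x ^ (n - i)))
          sums ((\<Sum>i. \<phi> i * of_real x ^ i) * (\<Sum>j. of_real (b j * x ^ j)))"
    by (rule Cauchy_product_sums)
  moreover have "(\<Sum>i. \<phi> i * of_real x ^ i) = \<Phi> (of_real x)"
    using \<Phi>_taylor_sums[of "of_real x"] x by (simp add: sums_iff)
  moreover have "(\<Sum>j. of_real (b j * x ^ j)) = (of_real ((1 - x / z1) powr (- \<alpha>)) :: complex)"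
    using sums_of_real[OF b_sums_x, where 'a = complex] by (simp add: sums_iff)
  ultimately have "(\<lambda>n. \<Sum>i\<le>n. \<phi> i * of_real x ^ i * of_real (b (n - i) * x ^ (n - i)))
      sums of_real ((1 - \<kappa> * (1 - (1 - q) * x) powr (- \<beta>)) powr (- \<alpha>))"
    using \<Phi>_of_real_factor[OF x] by simp
  moreover have "\<phi> i * of_real x ^ i * of_real (b (n - i) * x ^ (n - i))
                   = \<phi> i * of_real (b (n - i)) * of_real x ^ n" if "i \<le> n" for i n
  proof -
    have "\<phi> i * of_real x ^ i * of_real (b (n - i) * x ^ (n - i))
            = \<phi> i * of_real (b (n - i)) * (of_real x ^ i * of_real x ^ (n - i))"
      by (simp add: mult_ac)
    also have "of_real x ^ i * of_real x ^ (n - i) = (of_real x ^ n :: complex)"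
      using that by (simp flip: power_add)
    finally show ?thesis .
  qed
  then have "(\<Sum>i\<le>n. \<phi> i * of_real x ^ i * of_real (b (n - i) * x ^ (n - i)))
               = (\<Sum>i\<le>n. \<phi> i * of_real (b (n - i))) * of_real x ^ n" for n
    unfolding sum_distrib_right by (intro sum.cong refl) simp
  ultimately show ?thesis by simp
qed

lemma convolution_tendsto:
  "(\<lambda>n. (\<Sum>i\<le>n. \<phi> i * of_real (b (n - i))) * of_real (z1 ^ n * (real n + 1) powr (1 - \<alpha>)))
     \<longlonglongrightarrow> of_real ((\<beta> * (1 - c) / c) powr (- \<alpha>) / Gamma \<alpha>)"
proof -
  obtain r M where r: "z1 < r" and M: "\<And>n. norm (\<phi> n) \<le> M * (1 / r) ^ n"
    using \<phi>_geometric_bound by blast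
  define \<psi> where "\<psi> i = \<phi> i * of_real z1 ^ i" for i
  have "norm (\<psi> i) \<le> M * (z1 / r) ^ i" for i
    using mult_right_mono[OF M[of i], of "z1 ^ i"] z1_pos
    by (simp add: \<psi>_def norm_mult norm_power power_divide)
  from convolution_powr_tendsto[OF gbinomial_powr_tendsto[OF \<alpha>] this]
  have "(\<lambda>n. (\<Sum>i\<le>n. \<psi> i * of_real ((\<alpha> + real (n - i) - 1) gchoose (n - i)))
               * of_real ((real n + 1) powr (1 - \<alpha>))) \<longlonglongrightarrow> (\<Sum>i. \<psi> i) * of_real (1 / Gamma \<alpha>)"
    using r z1_pos by simp
  moreover have "(\<Sum>i. \<psi> i) = \<Phi> (of_real z1)"
    using \<Phi>_taylor_sums[of "of_real z1"] z1_pos by (simp add: \<psi>_def sums_iff)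
  moreover have "\<Phi> (of_real z1) = of_real ((\<beta> * (1 - c) / c) powr (- \<alpha>))"
    unfolding \<Phi>_def F_z1 of_real_minus[symmetric] using F_z1_pos by (intro powr_of_real) simp
  moreover have "\<psi> i * of_real ((\<alpha> + real (n - i) - 1) gchoose (n - i))
                   = \<phi> i * of_real (b (n - i)) * of_real (z1 ^ n)" if "i \<le> n" for i n
  proof -
    have "z1 ^ n = z1 ^ i * z1 ^ (n - i)" using that by (simp flip: power_add)
    then show ?thesis using z1_pos by (simp add: \<psi>_def b_def)
  qed
  then have "(\<Sum>i\<le>n. \<psi> i * of_real ((\<alpha> + real (n - i) - 1) gchoose (n - i)))
               * of_real ((real n + 1) powr (1 - \<alpha>))
             = (\<Sum>i\<le>n. \<phi> i * of_real (b (n - i))) * of_real (z1 ^ n * (real n + 1) powr (1 - \<alpha>))" for n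
    by (simp only: of_real_mult sum_distrib_right mult.assoc, intro sum.cong refl) simp
  ultimately show ?thesis
    by (simp only: of_real_mult[symmetric] times_divide_eq_right mult_1_right)
qed

lemma limit_constant:
  "p powr \<alpha> * (\<beta> * (1 - c) / c) powr (- \<alpha>) / Gamma \<alpha>
     = (p * q) powr \<alpha> * (1 - p) powr (\<alpha> / \<beta>) / (Gamma \<alpha> * \<beta> powr \<alpha> * (1 - c) powr \<alpha>)"
proof -
  have "0 < 1 - c" using c_less_q q by simp
  then have "(\<beta> * (1 - c) / c) powr (- \<alpha>) = c powr \<alpha> / (\<beta> powr \<alpha> * (1 - c) powr \<alpha>)"
    using c_pos \<beta> by (simp add: powr_minus powr_divide powr_mult)
  moreover have "c powr \<alpha> = q powr \<alpha> * (1 - p) powr (\<alpha> / \<beta>)"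
    unfolding c_def using p q \<beta> by (simp add: powr_mult powr_powr)
  moreover have "(p * q) powr \<alpha> = p powr \<alpha> * q powr \<alpha>"
    using p q by (simp add: powr_mult)
  ultimately show ?thesis by (simp add: mult_ac)
qed

lemma pmf_random_sum_eq_convolution:
  assumes "\<And>n. pmf N n = nbin \<alpha> p n" "\<And>n. pmf X n = nbin \<beta> q n"
  shows "of_real (pmf (random_sum_pmf N X) n) = of_real (p powr \<alpha>) * (\<Sum>i\<le>n. \<phi> i * of_real (b (n - i)))"
proof -
  have "(\<lambda>n. (of_real (pmf (random_sum_pmf N X) n) - of_real (p powr \<alpha>) * (\<Sum>i\<le>n. \<phi> i * of_real (b (n - i))))
            * of_real x ^ n) sums 0" if "0 < x" "x < 1" for x
  proof -
    define G where "G = (1 - \<kappa> * (1 - (1 - q) * x) powr (- \<beta>)) powr (- \<alpha>)"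
    have "(\<lambda>n. pmf (random_sum_pmf N X) n * x ^ n) sums (p powr \<alpha> * G)"
      using random_sum_pmf_nbin_sums[OF p q \<beta> assms] that by (simp add: G_def \<kappa>_def mult_ac)
    then have "(\<lambda>n. of_real (pmf (random_sum_pmf N X) n) * of_real x ^ n)
                 sums (of_real (p powr \<alpha>) * of_real G :: complex)"
      using sums_of_real[where 'a = complex] by fastforce
    moreover have "(\<lambda>n. of_real (p powr \<alpha>) * ((\<Sum>i\<le>n. \<phi> i * of_real (b (n - i))) * of_real x ^ n))
                     sums (of_real (p powr \<alpha>) * of_real G)"
      using that one_less_z1 unfolding G_def by (intro sums_mult convolution_sums) auto
    ultimately show ?thesis
      using sums_diff by (fastforce simp: algebra_simps)
  qed
  then have "of_real (pmf (random_sum_pmf N X) n) - of_real (p powr \<alpha>) * (\<Sum>i\<le>n. \<phi> i * of_real (b (n - i))) = 0"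
    by (intro powser_eq_0_on_interval[of 1]) auto
  then show ?thesis
    by simp
qed

lemma pmf_random_sum_tendsto:
  assumes "\<And>n. pmf N n = nbin \<alpha> p n" "\<And>n. pmf X n = nbin \<beta> q n"
  shows "(\<lambda>n. pmf (random_sum_pmf N X) n * z1 ^ n * (real n + 1) powr (1 - \<alpha>))
           \<longlonglongrightarrow> p powr \<alpha> * (\<beta> * (1 - c) / c) powr (- \<alpha>) / Gamma \<alpha>"
proof -
  have "(\<lambda>n. of_real (p powr \<alpha>) * ((\<Sum>i\<le>n. \<phi> i * of_real (b (n - i)))
              * of_real (z1 ^ n * (real n + 1) powr (1 - \<alpha>))))
          \<longlonglongrightarrow> of_real (p powr \<alpha>) * (of_real ((\<beta> * (1 - c) / c) powr (- \<alpha>) / Gamma \<alpha>) :: complex)"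
    by (intro tendsto_mult tendsto_const convolution_tendsto)
  then have "(\<lambda>n. of_real (pmf (random_sum_pmf N X) n * z1 ^ n * (real n + 1) powr (1 - \<alpha>)))
          \<longlonglongrightarrow> (of_real (p powr \<alpha> * (\<beta> * (1 - c) / c) powr (- \<alpha>) / Gamma \<alpha>) :: complex)"
    by (simp add: pmf_random_sum_eq_convolution[OF assms] mult.assoc)
  then show ?thesis
    by (simp only: tendsto_of_real_iff)
qed

end

theorem proposition1:
  fixes \<alpha> \<beta> p q :: real and N X :: "nat pmf"
  assumes "\<alpha> > 0" and "\<beta> > 0"
    and "0 < p" and "p < 1" and "0 < q" and "q < 1"
    and "\<And>n. pmf N n = nbin \<alpha> p n"
    and "\<And>n. pmf X n = nbin \<beta> q n"
  shows "(\<lambda>n. pmf (random_sum_pmf N X) n) \<sim>[at_top]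
    (\<lambda>n. ((p * q) powr \<alpha> * (1 - p) powr (\<alpha> / \<beta>)
            / (Gamma \<alpha> * \<beta> powr \<alpha> * (1 - q * (1 - p) powr (1 / \<beta>)) powr \<alpha>))
          * ((1 - q * (1 - p) powr (1 / \<beta>)) / (1 - q)) powr (- real n)
          * real n powr (\<alpha> - 1))"
proof -
  interpret nbin_compound \<alpha> \<beta> p q
    by unfold_locales (use assms in auto)
  have "Gamma \<alpha> \<noteq> 0"
    using Gamma_real_pos[OF assms(1)] by linarith
  then have "p powr \<alpha> * (\<beta> * (1 - c) / c) powr (- \<alpha>) / Gamma \<alpha> \<noteq> 0"
    using assms(2,3) c_pos c_less_q q by simp
  from asymp_equiv_geometric_powr[OF pmf_random_sum_tendsto[OF assms(7,8)] this z1_pos]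
  show ?thesis
    unfolding limit_constant by (simp add: z1_def c_def)
qed

end
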